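(* Let $f\colon\mathbb Z^m\to\mathbb Q\cup\{\infty\}$ be SBO jump M-convex. Let $r\in\mathbb Z^m$, let $z^{(1)},z^{(2)}\in\mathbb Z^m$ with $z^{(1)},z^{(2)}\equiv r\pmod 2$, and let $i^*\in[m]$ satisfy $z^{(1)}_{i^*}-z^{(2)}_{i^*}\ge2$. Then there exist $z^{(1)\prime},z^{(2)\prime}\in\mathbb Z^m$ such that: - $z^{(1)\prime},z^{(2)\prime}\equiv r\pmod2$; - $z^{(1)\prime}+z^{(2)\prime}=z^{(1)}+z^{(2)}$; - $z^{(1)\prime}_{i^*}=z^{(1)}_{i^*}-2$ and $z^{(2)\prime}_{i^*}=z^{(2)}_{i^*}+2$; - for all $i\in[m]$, if $z^{(1)}_i=z^{(2)}_i$ then $z^{(1)}_i=z^{(1)\prime}_i=z^{(2)\prime}_i=z^{(2)}_i$; - $f(z^{(1)\prime})+f(z^{(2)\prime})\le f(z^{(1)})+f(z^{(2)})$.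
   Context: For $x,y\in\mathbb Z^m$, write $x\sqsubseteq y$ if $|x_i|\le|y_i|$ and $x_iy_i\ge0$ for all $i$. A $2$-step decomposition of $d\in\mathbb Z^m$ is a multiset $p^{(1)},\dots,p^{(\ell)}\in\mathbb Z^m$ with $\|p^{(k)}\|_1=2$ and $p^{(k)}\sqsubseteq d$ for all $k$, and $d=\sum_kp^{(k)}$. $f$ is SBO jump M-convex if the following holds for all $z^{(1)},z^{(2)}$ with finite $f$-values. There must exist a $2$-step decomposition $p^{(1)},\dots,p^{(\ell)}$ of $z^{(2)}-z^{(1)}$ and reals $g^{(1)},\dots,g^{(\ell)}$ such that: - $f(z^{(2)})=f(z^{(1)})+\sum_kg^{(k)}$; - $f(z^{(1)}+\sum_{k\in I}p^{(k)})\le f(z^{(1)})+\sum_{k\in I}g^{(k)}$ for all $I\subseteq[\ell]$. Congruence modulo $2$ is componentwise. *)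

theory Defs
  imports "HOL-Library.Extended_Real"
begin

text \<open>Vectors in Z^m are functions from a finite index type 'n (with CARD('n) = m) to int.
  Values in Q \<union> {\<infinity>} are represented in ereal (with an explicit range assumption).\<close>

definition sqsub :: "('n \<Rightarrow> int) \<Rightarrow> ('n \<Rightarrow> int) \<Rightarrow> bool" where
  "sqsub x y \<longleftrightarrow> (\<forall>i. \<bar>x i\<bar> \<le> \<bar>y i\<bar> \<and> x i * y i \<ge> 0)"

text \<open>A 2-step decomposition of d: a family p 0, ..., p (l-1) (a multiset, given as an indexed family).\<close>
definition two_step_decomp :: "nat \<Rightarrow> (nat \<Rightarrow> ('n::finite \<Rightarrow> int)) \<Rightarrow> ('n \<Rightarrow> int) \<Rightarrow> bool" where
  "two_step_decomp l p d \<longleftrightarrow>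
     (\<forall>k<l. (\<Sum>i\<in>UNIV. \<bar>p k i\<bar>) = 2 \<and> sqsub (p k) d) \<and> d = (\<lambda>i. \<Sum>k<l. p k i)"

definition SBO_jump_M_convex :: "(('n::finite \<Rightarrow> int) \<Rightarrow> ereal) \<Rightarrow> bool" where
  "SBO_jump_M_convex f \<longleftrightarrow>
     (\<forall>z1 z2. f z1 \<noteq> \<infinity> \<and> f z2 \<noteq> \<infinity> \<longrightarrow>
        (\<exists>l p (g :: nat \<Rightarrow> real).
           two_step_decomp l p (\<lambda>i. z2 i - z1 i) \<and>
           f z2 = f z1 + ereal (\<Sum>k<l. g k) \<and>
           (\<forall>I\<subseteq>{..<l}. f (\<lambda>i. z1 i + (\<Sum>k\<in>I. p k i)) \<le> f z1 + ereal (\<Sum>k\<in>I. g k))))"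

end

theory Submission
  imports Defs
begin

text \<open>Let d = z2 - z1 and take a 2-step decomposition of d as provided by SBO jump M-convexity.
  Each step touches one or two coordinates, so it is an edge (or a loop) of a multigraph on the
  coordinates; sign compatibility with d makes the degree of i equal to \<bar>d i\<bar>, which is even
  by the parity assumptions. Walking from i* along unused edges until the walk first returns to i*
  gives an even subgraph I in which i* has degree exactly 2. Then q, the sum of the steps in I, is
  even, has q i* = -2 and vanishes where z1 and z2 agree. Since z2 - q is z1 plus the steps
  outside I, adding the M-convexity inequalities for I and for its complement gives
  f (z1 + q) + f (z2 - q) \<le> f z1 + f z2.\<close>

lemma nonneg_sum_eq_2_cases:
  fixes a :: "'n::finite \<Rightarrow> int"
  assumes nonneg: "\<forall>i. 0 \<le> a i" and sum2: "(\<Sum>i\<in>UNIV. a i) = 2" and pos: "0 < a t"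
  obtains "a = (\<lambda>i. if i = t then 2 else 0)"
    | w where "w \<noteq> t" "a = (\<lambda>i. if i = t \<or> i = w then 1 else 0)"
proof -
  have rest: "a t + (\<Sum>i\<in>UNIV - {t}. a i) = 2"
    using sum2 by (metis finite UNIV_I sum.remove)
  have zero_off: "a i = 0" if "(\<Sum>i\<in>S. a i) = 0" "i \<in> S" "finite S" for S i
    using that nonneg sum_nonneg_eq_0_iff by blast
  show thesis
  proof (cases "a t = 2")
    case True
    then have "a i = 0" if "i \<noteq> t" for i
      using rest that by (intro zero_off[of "UNIV - {t}"]) auto
    then show thesis using True that(1) by fastforce
  next
    case False
    have "0 \<le> (\<Sum>i\<in>UNIV - {t}. a i)" using nonneg by (simp add: sum_nonneg)
    then have at: "a t = 1" and rest1: "(\<Sum>i\<in>UNIV - {t}. a i) = 1"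
      using rest pos False by linarith+
    then obtain w where w: "w \<noteq> t" "a w \<noteq> 0"
      by (metis DiffE insertI1 sum.neutral zero_neq_one)
    have rest2: "a w + (\<Sum>i\<in>UNIV - {t} - {w}. a i) = 1"
      using rest1 w(1) by (metis finite sum.remove Diff_iff UNIV_I singletonD)
    have "0 \<le> (\<Sum>i\<in>UNIV - {t} - {w}. a i)" using nonneg by (simp add: sum_nonneg)
    then have aw: "a w = 1" and "(\<Sum>i\<in>UNIV - {t} - {w}. a i) = 0"
      using rest2 w(2) nonneg[rule_format, of w] by linarith+
    then have "a i = 0" if "i \<noteq> t" "i \<noteq> w" for i
      using that by (intro zero_off[of "UNIV - {t} - {w}"]) auto
    then show thesis using at aw w(1) that(2) by fastforce
  qed
qed

text \<open>A family of vectors a k with nonnegative entries summing to 2 is read as a multigraph on the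
  index type: each a k is a loop or an edge, by the lemma above, and
  \<open>\<Sum>k\<in>J. a k i\<close> is the degree of the vertex i in the subfamily J.\<close>

lemma subfamily_joining_odd_vertices:
  fixes a :: "nat \<Rightarrow> 'n::finite \<Rightarrow> int"
  assumes "finite K" and "\<forall>k\<in>K. (\<forall>i. 0 \<le> a k i) \<and> (\<Sum>i\<in>UNIV. a k i) = 2"
    and "s \<noteq> t" and "\<forall>i. odd (\<Sum>k\<in>K. a k i) \<longleftrightarrow> i = s \<or> i = t"
  shows "\<exists>J\<subseteq>K. (\<Sum>k\<in>J. a k s) = 1 \<and> (\<forall>i. odd (\<Sum>k\<in>J. a k i) \<longleftrightarrow> i = s \<or> i = t)"
  using assms
proof (induction "card K" arbitrary: K t rule: less_induct)
  case less
  note fin = less.prems(1) and edges = less.prems(2) and st = less.prems(3)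
    and odd_K = less.prems(4)
  have "(\<Sum>k\<in>K. a k t) \<noteq> 0" using odd_K by (metis even_zero)
  then obtain k where k: "k \<in> K" "a k t \<noteq> 0" by (meson sum.neutral)
  have edge_k: "\<forall>i. 0 \<le> a k i" "(\<Sum>i\<in>UNIV. a k i) = 2" using edges k(1) by auto
  then have "0 < a k t" using k(2) by (metis order_less_le)
  have remove: "(\<Sum>k'\<in>K - {k}. a k' i) = (\<Sum>k'\<in>K. a k' i) - a k i" for i
    using fin k(1) by (simp add: sum_diff1)
  have IH: "\<exists>J\<subseteq>K - {k}. (\<Sum>k\<in>J. a k s) = 1 \<and> (\<forall>i. odd (\<Sum>k\<in>J. a k i) \<longleftrightarrow> i = s \<or> i = u)"
    if "s \<noteq> u" "\<forall>i. odd (\<Sum>k\<in>K - {k}. a k i) \<longleftrightarrow> i = s \<or> i = u" for u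
    using less.hyps[OF card_Diff1_less[OF fin k(1)]] that fin edges by simp
  show ?case
  proof (cases rule: nonneg_sum_eq_2_cases[OF edge_k \<open>0 < a k t\<close>])
    case 1
    then have "\<forall>i. odd (\<Sum>k'\<in>K - {k}. a k' i) \<longleftrightarrow> i = s \<or> i = t"
      using odd_K by (simp add: remove)
    then obtain J where "J \<subseteq> K - {k}" "(\<Sum>k\<in>J. a k s) = 1"
      "\<forall>i. odd (\<Sum>k\<in>J. a k i) \<longleftrightarrow> i = s \<or> i = t"
      using IH[OF st] by blast
    then show ?thesis by (intro exI[of _ J]) auto
  next
    case (2 w)
    show ?thesis
    proof (cases "w = s")
      case True
      then show ?thesis using 2 k(1) by (intro exI[of _ "{k}"]) auto
    next
      case False
      have "odd (\<Sum>k'\<in>K - {k}. a k' i) \<longleftrightarrow> i = s \<or> i = w" for i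
        using odd_K[rule_format, of i] 2 st False by (cases "i = t"; cases "i = w") (auto simp: remove)
      then obtain J where J: "J \<subseteq> K - {k}" "(\<Sum>k\<in>J. a k s) = 1"
        "\<forall>i. odd (\<Sum>k\<in>J. a k i) \<longleftrightarrow> i = s \<or> i = w"
        using IH[of w] False by blast
      have "finite J" "k \<notin> J" using J(1) fin finite_subset by auto
      then have sum_insert_k: "(\<Sum>k'\<in>insert k J. a k' i) = a k i + (\<Sum>k'\<in>J. a k' i)" for i
        by simp
      have "odd (\<Sum>k'\<in>insert k J. a k' i) \<longleftrightarrow> i = s \<or> i = t" for i
        using J(3)[rule_format, of i] 2 st False by (cases "i = t"; cases "i = w") (auto simp: sum_insert_k)
      moreover have "(\<Sum>k'\<in>insert k J. a k' s) = 1" using J(2) 2 st False by (simp add: sum_insert_k)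
      moreover have "insert k J \<subseteq> K" using J(1) k(1) by auto
      ultimately show ?thesis by (intro exI[of _ "insert k J"]) auto
    qed
  qed
qed

lemma even_subfamily_through_vertex:
  fixes a :: "nat \<Rightarrow> 'n::finite \<Rightarrow> int"
  assumes fin: "finite K" and edges: "\<forall>k\<in>K. (\<forall>i. 0 \<le> a k i) \<and> (\<Sum>i\<in>UNIV. a k i) = 2"
    and even_K: "\<forall>i. even (\<Sum>k\<in>K. a k i)" and "(\<Sum>k\<in>K. a k v) \<noteq> 0"
  shows "\<exists>I\<subseteq>K. (\<Sum>k\<in>I. a k v) = 2 \<and> (\<forall>i. even (\<Sum>k\<in>I. a k i))"
proof -
  obtain k where k: "k \<in> K" "a k v \<noteq> 0" using \<open>(\<Sum>k\<in>K. a k v) \<noteq> 0\<close> by (meson sum.neutral)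
  have edge_k: "\<forall>i. 0 \<le> a k i" "(\<Sum>i\<in>UNIV. a k i) = 2" using edges k(1) by auto
  then have "0 < a k v" using k(2) by (metis order_less_le)
  show ?thesis
  proof (cases rule: nonneg_sum_eq_2_cases[OF edge_k \<open>0 < a k v\<close>])
    case 1
    then show ?thesis using k(1) by (intro exI[of _ "{k}"]) auto
  next
    case (2 w)
    have "odd (\<Sum>k'\<in>K - {k}. a k' i) \<longleftrightarrow> i = v \<or> i = w" for i
      using even_K[rule_format, of i] fin k(1) 2 by (simp add: sum_diff1)
    then obtain J where J: "J \<subseteq> K - {k}" "(\<Sum>k\<in>J. a k v) = 1"
      "\<forall>i. odd (\<Sum>k\<in>J. a k i) \<longleftrightarrow> i = v \<or> i = w"
      using subfamily_joining_odd_vertices[of "K - {k}" a v w] fin edges 2 by blast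
    have "finite J" "k \<notin> J" using J(1) fin finite_subset by auto
    then have sum_insert_k: "(\<Sum>k'\<in>insert k J. a k' i) = a k i + (\<Sum>k'\<in>J. a k' i)" for i
      by simp
    have "even (\<Sum>k'\<in>insert k J. a k' i)" for i
      using J(3)[rule_format, of i] 2 by (auto simp: sum_insert_k)
    moreover have "(\<Sum>k'\<in>insert k J. a k' v) = 2" using J(2) 2 by (simp add: sum_insert_k)
    moreover have "insert k J \<subseteq> K" using J(1) k(1) by auto
    ultimately show ?thesis by (intro exI[of _ "insert k J"]) auto
  qed
qed

lemma sqsub_eq_sgn_mult_abs:
  assumes "sqsub x y"
  shows "x i = sgn (y i) * \<bar>x i\<bar>"
proof -
  have "\<bar>x i\<bar> \<le> \<bar>y i\<bar>" "0 \<le> x i * y i" using assms by (auto simp: sqsub_def)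
  then show ?thesis by (cases "y i" "0::int" rule: linorder_cases) (auto simp: zero_le_mult_iff)
qed

lemma two_step_decompD:
  assumes "two_step_decomp l p d"
  shows "k < l \<Longrightarrow> (\<Sum>i\<in>UNIV. \<bar>p k i\<bar>) = 2" and "k < l \<Longrightarrow> sqsub (p k) d"
    and "d i = (\<Sum>k<l. p k i)"
  using assms by (auto simp: two_step_decomp_def)

lemma two_step_decomp_sum_eq_sgn_mult:
  assumes "two_step_decomp l p d" and "I \<subseteq> {..<l}"
  shows "(\<Sum>k\<in>I. p k i) = sgn (d i) * (\<Sum>k\<in>I. \<bar>p k i\<bar>)"
proof -
  have "(\<Sum>k\<in>I. p k i) = (\<Sum>k\<in>I. sgn (d i) * \<bar>p k i\<bar>)"
  proof (rule sum.cong)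
    fix k assume "k \<in> I"
    then have "k < l" using assms(2) by auto
    then show "p k i = sgn (d i) * \<bar>p k i\<bar>"
      by (rule sqsub_eq_sgn_mult_abs[OF two_step_decompD(2)[OF assms(1)]])
  qed (rule refl)
  also have "\<dots> = sgn (d i) * (\<Sum>k\<in>I. \<bar>p k i\<bar>)" by (rule sum_distrib_left[symmetric])
  finally show ?thesis .
qed

lemma two_step_decomp_sum_abs:
  assumes "two_step_decomp l p d"
  shows "(\<Sum>k<l. \<bar>p k i\<bar>) = \<bar>d i\<bar>"
proof (cases "d i = 0")
  case True
  have "p k i = 0" if "k < l" for k
    using two_step_decompD(2)[OF assms that, unfolded sqsub_def, rule_format, of i] True by simp
  then show ?thesis using True by simp
next
  case False
  have "d i = (\<Sum>k<l. p k i)" by (rule two_step_decompD(3)[OF assms])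
  also have "\<dots> = sgn (d i) * (\<Sum>k<l. \<bar>p k i\<bar>)"
    by (rule two_step_decomp_sum_eq_sgn_mult[OF assms order_refl])
  finally have "\<bar>d i\<bar> = \<bar>sgn (d i)\<bar> * \<bar>\<Sum>k<l. \<bar>p k i\<bar>\<bar>"
    by (metis abs_mult)
  with False show ?thesis by (simp add: abs_sgn_eq)
qed

lemma two_step_decomp_even_subfamily:
  assumes dec: "two_step_decomp l p d" and even_d: "\<forall>i. even (d i)" and "d v \<noteq> 0"
  obtains I where "I \<subseteq> {..<l}" and "(\<Sum>k\<in>I. p k v) = 2 * sgn (d v)"
    and "\<And>i. even (\<Sum>k\<in>I. p k i)" and "\<And>i. d i = 0 \<Longrightarrow> (\<Sum>k\<in>I. p k i) = 0"
proof -
  have "\<exists>I\<subseteq>{..<l}. (\<Sum>k\<in>I. \<bar>p k v\<bar>) = 2 \<and> (\<forall>i. even (\<Sum>k\<in>I. \<bar>p k i\<bar>))"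
  proof (rule even_subfamily_through_vertex)
    show "\<forall>k\<in>{..<l}. (\<forall>i. 0 \<le> \<bar>p k i\<bar>) \<and> (\<Sum>i\<in>UNIV. \<bar>p k i\<bar>) = 2"
      using two_step_decompD(1)[OF dec] by simp
    show "\<forall>i. even (\<Sum>k\<in>{..<l}. \<bar>p k i\<bar>)"
      using even_d by (simp add: two_step_decomp_sum_abs[OF dec])
    show "(\<Sum>k\<in>{..<l}. \<bar>p k v\<bar>) \<noteq> 0"
      using \<open>d v \<noteq> 0\<close> by (simp add: two_step_decomp_sum_abs[OF dec])
  qed simp
  then obtain I where I: "I \<subseteq> {..<l}" "(\<Sum>k\<in>I. \<bar>p k v\<bar>) = 2" "\<forall>i. even (\<Sum>k\<in>I. \<bar>p k i\<bar>)"
    by blast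
  show thesis
    using that[OF I(1)] I(2,3) by (simp add: two_step_decomp_sum_eq_sgn_mult[OF dec I(1)])
qed

lemma SBO_jump_M_convex_exchange:
  assumes conv: "SBO_jump_M_convex f" and "f z1 \<noteq> \<infinity>" and "f z2 \<noteq> \<infinity>"
  obtains l p where "two_step_decomp l p (\<lambda>i. z2 i - z1 i)"
    and "\<And>I. I \<subseteq> {..<l} \<Longrightarrow>
      f (\<lambda>i. z1 i + (\<Sum>k\<in>I. p k i)) + f (\<lambda>i. z2 i - (\<Sum>k\<in>I. p k i)) \<le> f z1 + f z2"
proof -
  obtain l p and g :: "nat \<Rightarrow> real" where
    dec: "two_step_decomp l p (\<lambda>i. z2 i - z1 i)" and
    f_z2: "f z2 = f z1 + ereal (\<Sum>k<l. g k)" and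
    bound: "\<forall>I\<subseteq>{..<l}. f (\<lambda>i. z1 i + (\<Sum>k\<in>I. p k i)) \<le> f z1 + ereal (\<Sum>k\<in>I. g k)"
    using conv \<open>f z1 \<noteq> \<infinity>\<close> \<open>f z2 \<noteq> \<infinity>\<close> unfolding SBO_jump_M_convex_def by blast
  have "f (\<lambda>i. z1 i + (\<Sum>k\<in>I. p k i)) + f (\<lambda>i. z2 i - (\<Sum>k\<in>I. p k i)) \<le> f z1 + f z2"
    if I: "I \<subseteq> {..<l}" for I
  proof -
    have complement: "z2 i - (\<Sum>k\<in>I. p k i) = z1 i + (\<Sum>k\<in>{..<l} - I. p k i)" for i
      using two_step_decompD(3)[OF dec, of i] I by (simp add: sum_diff)
    have "f (\<lambda>i. z1 i + (\<Sum>k\<in>I. p k i)) + f (\<lambda>i. z2 i - (\<Sum>k\<in>I. p k i))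
        \<le> (f z1 + ereal (\<Sum>k\<in>I. g k)) + (f z1 + ereal (\<Sum>k\<in>{..<l} - I. g k))"
      unfolding complement by (intro add_mono bound[rule_format]) (use I in auto)
    also have "\<dots> = f z1 + f z2"
      using \<open>f z1 \<noteq> \<infinity>\<close> I by (cases "f z1") (simp_all add: f_z2 sum_diff)
    finally show ?thesis .
  qed
  with dec show thesis by (rule that)
qed

lemma SBO_jump_M_convex_even_exchange:
  fixes f :: "('n::finite \<Rightarrow> int) \<Rightarrow> ereal"
  assumes conv: "SBO_jump_M_convex f" and "f z1 \<noteq> -\<infinity>" and "f z2 \<noteq> -\<infinity>"
    and even_diff: "\<And>i. even (z2 i - z1 i)" and "z1 v \<noteq> z2 v"
  obtains q where "\<And>i. even (q i)" and "q v = 2 * sgn (z2 v - z1 v)"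
    and "\<And>i. z1 i = z2 i \<Longrightarrow> q i = 0"
    and "f (\<lambda>i. z1 i + q i) + f (\<lambda>i. z2 i - q i) \<le> f z1 + f z2"
proof (cases "f z1 = \<infinity> \<or> f z2 = \<infinity>")
  case True
  with \<open>f z1 \<noteq> -\<infinity>\<close> \<open>f z2 \<noteq> -\<infinity>\<close> have "f z1 + f z2 = \<infinity>" by auto
  then show thesis by (intro that[of "\<lambda>i. if i = v then 2 * sgn (z2 v - z1 v) else 0"]) auto
next
  case False
  then obtain l p where dec: "two_step_decomp l p (\<lambda>i. z2 i - z1 i)"
    and exchange: "\<And>I. I \<subseteq> {..<l} \<Longrightarrow>
      f (\<lambda>i. z1 i + (\<Sum>k\<in>I. p k i)) + f (\<lambda>i. z2 i - (\<Sum>k\<in>I. p k i)) \<le> f z1 + f z2"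
    using SBO_jump_M_convex_exchange[OF conv] by blast
  have "\<forall>i. even (z2 i - z1 i)" "z2 v - z1 v \<noteq> 0" using even_diff \<open>z1 v \<noteq> z2 v\<close> by auto
  then obtain I where I: "I \<subseteq> {..<l}" "(\<Sum>k\<in>I. p k v) = 2 * sgn (z2 v - z1 v)"
    "\<And>i. even (\<Sum>k\<in>I. p k i)" "\<And>i. z2 i - z1 i = 0 \<Longrightarrow> (\<Sum>k\<in>I. p k i) = 0"
    using two_step_decomp_even_subfamily[OF dec] by blast
  show thesis
  proof (rule that)
    show "(\<Sum>k\<in>I. p k i) = 0" if "z1 i = z2 i" for i using I(4) that by simp
    show "f (\<lambda>i. z1 i + (\<Sum>k\<in>I. p k i)) + f (\<lambda>i. z2 i - (\<Sum>k\<in>I. p k i)) \<le> f z1 + f z2"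
      by (rule exchange[OF I(1)])
  qed (fact I(2,3))+
qed

theorem lemma18:
  fixes f :: "('n::finite \<Rightarrow> int) \<Rightarrow> ereal"
    and r z1 z2 :: "'n \<Rightarrow> int" and istar :: 'n
  assumes vals: "\<forall>z. f z = \<infinity> \<or> (\<exists>q::rat. f z = ereal (of_rat q))"
    and conv: "SBO_jump_M_convex f"
    and par1: "\<forall>i. z1 i mod 2 = r i mod 2"
    and par2: "\<forall>i. z2 i mod 2 = r i mod 2"
    and gap: "z1 istar - z2 istar \<ge> 2"
  shows "\<exists>z1' z2' :: 'n \<Rightarrow> int.
           (\<forall>i. z1' i mod 2 = r i mod 2) \<and> (\<forall>i. z2' i mod 2 = r i mod 2) \<and>
           (\<forall>i. z1' i + z2' i = z1 i + z2 i) \<and>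
           z1' istar = z1 istar - 2 \<and> z2' istar = z2 istar + 2 \<and>
           (\<forall>i. z1 i = z2 i \<longrightarrow> z1' i = z1 i \<and> z2' i = z2 i) \<and>
           f z1' + f z2' \<le> f z1 + f z2"
proof -
  have "f z1 \<noteq> -\<infinity>" "f z2 \<noteq> -\<infinity>" using vals by (metis MInfty_neq_PInfty(1) MInfty_neq_ereal(1))+
  moreover have "even (z2 i - z1 i)" for i
    using par1[rule_format, of i] par2[rule_format, of i] by presburger
  moreover have "z1 istar \<noteq> z2 istar" using gap by simp
  ultimately obtain q where q_even: "\<And>i. even (q i)" and "q istar = 2 * sgn (z2 istar - z1 istar)"
    and q_zero: "\<And>i. z1 i = z2 i \<Longrightarrow> q i = 0"
    and q_le: "f (\<lambda>i. z1 i + q i) + f (\<lambda>i. z2 i - q i) \<le> f z1 + f z2"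
    using SBO_jump_M_convex_even_exchange[OF conv] by blast
  with gap have q_istar: "q istar = -2" by simp
  have "(z1 i + q i) mod 2 = r i mod 2" "(z2 i - q i) mod 2 = r i mod 2" for i
    using par1[rule_format, of i] par2[rule_format, of i] q_even[of i] by presburger+
  with q_istar q_zero q_le show ?thesis
    by (intro exI[of _ "\<lambda>i. z1 i + q i"] exI[of _ "\<lambda>i. z2 i - q i"]) simp
qed

end
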